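(* Let $k\ge2$ and $r\ge0$ be integers and $\alpha>k+r$ real. Then $$\sum_{n=1}^\infty\frac{H_{n+\alpha}}{\binom{n+k+r}{k}}=k\sum_{j=1}^{k-1}(-1)^{j+1}\binom{k-1}{j}\Bigg\{H_{\alpha-r-1}^2+H_{\alpha-r-1}^{(2)}-H_{\alpha-r-1-j}^2-H_{\alpha-r-1-j}^{(2)}-(r+1+j-\alpha)\sum_{i=1}^{r+1+j}\frac{H_{\alpha+i-r-1-j}}{i(\alpha+i-r-1-j)}+(r+1-\alpha)\sum_{i=1}^{r+1}\frac{H_{\alpha+i-r-1}}{i(\alpha+i-r-1)}\Bigg\},$$ $$\sum_{n=1}^\infty\frac{H_{n+\alpha}^{(2)}}{\binom{n+k+r}{k}}=k\sum_{j=1}^{k-1}(-1)^{j+1}\binom{k-1}{j}\Bigg\{(r+1-\alpha)\sum_{i=1}^{r+1}\frac{H^{(2)}_{\alpha+i-r-1}}{i(\alpha+i-r-1)}-(r+1+j-\alpha)\sum_{i=1}^{r+1+j}\frac{H^{(2)}_{\alpha+i-r-1-j}}{i(\alpha+i-r-1-j)}-\sum_{i=1}^{j}\frac{H_{\alpha+i-r-1-j}}{(\alpha+i-r-1-j)^2}$$ $$+2H^{(3)}_{\alpha-r-1}+H_{\alpha-r-1-j}\zeta(2)+2H_{\alpha-r-1}H^{(2)}_{\alpha-r-1}-2H^{(3)}_{\alpha-r-1-j}-H_{\alpha-r-1}\zeta(2)-2H_{\alpha-r-1-j}H^{(2)}_{\alpha-r-1-j}\Bigg\},$$ $$\sum_{n=1}^\infty\frac{H_{n+\alpha}^2}{\binom{n+k+r}{k}}=k\sum_{j=1}^{k-1}(-1)^{j+1}\binom{k-1}{j}\Bigg\{H^3_{\alpha-r-1}+H_{\alpha-r-1}H^{(2)}_{\alpha-r-1}+H_{\alpha-r-1}\zeta(2)-H^3_{\alpha-r-1-j}-H_{\alpha-r-1-j}H^{(2)}_{\alpha-r-1-j}-H_{\alpha-r-1-j}\zeta(2)$$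 $$+(r+1-\alpha)\sum_{i=1}^{r+1}\frac{H^2_{\alpha+i-r-1}}{i(\alpha+i-r-1)}+\sum_{i=1}^{j}\frac{H_{\alpha+i-r-1-j}}{(\alpha+i-r-1-j)^2}-(r+1+j-\alpha)\sum_{i=1}^{r+1+j}\frac{H^2_{\alpha+i-r-1-j}}{i(\alpha+i-r-1-j)}\Bigg\}.$$
   Context: Shifted harmonic numbers: for a real $\alpha$ that is not a negative integer, $H_\alpha := \sum_{k=1}^\infty\left(\frac1k-\frac1{k+\alpha}\right)$ and, for integers $m\ge 2$, $H_\alpha^{(m)} := \sum_{k=1}^\infty\left(\frac1{k^m}-\frac1{(k+\alpha)^m}\right)=\zeta(m)-\zeta(m,\alpha+1)$, where $\zeta$ is the Riemann zeta function and $\zeta(s,\alpha+1)=\sum_{n=1}^\infty (n+\alpha)^{-s}$ is the Hurwitz zeta function. Powers such as $H_\alpha^2$ mean $(H_\alpha)^2$. Empty sums are $0$. *)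

theory Defs
  imports "HOL-Analysis.Analysis"
begin

definition sH :: "real \<Rightarrow> real" where
  "sH a = (\<Sum>k. 1 / real (Suc k) - 1 / (real (Suc k) + a))"

definition sHm :: "nat \<Rightarrow> real \<Rightarrow> real" where
  "sHm m a = (\<Sum>k. 1 / real (Suc k) ^ m - 1 / (real (Suc k) + a) ^ m)"

definition zeta2 :: real where
  "zeta2 = (\<Sum>n. 1 / real (Suc n) ^ 2)"

end

theory Submission
  imports Defs "HOL-Real_Asymp.Real_Asymp"
begin

text \<open>Partial fractions write 1 / binom(n+k+r, k) as
  k \<Sum>j (-1)^(j+1) binom(k-1, j) (1/(n+r+1) - 1/(n+r+1+j)), so each of the three series is a
  combination of tails of hsum f x = \<Sum>m>=1 f(m+x) (1/m - 1/(m+x)) for f = H, H^(2), H^2.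
  Comparing hsum f x with hsum f (x-1) termwise gives a difference equation in x.
  For f = H it is solved by H_x^2 + H_x^(2): the difference of the two sides is 1-periodic,
  vanishes at the integers and, both sides being increasing, is squeezed to 0.
  For f = H^(2) and f = H^2 only the differences hsum f (x + j) - hsum f x are needed, and the
  difference equation telescopes; the increments come from the series
  \<Sum>m 1/(m (m+x)) = H_x / x and \<Sum>m 1/(m (m+x)^2) = H_x / x^2 - (zeta(2) - H_x^(2)) / x.\<close>

lemma summable_inverse_Suc_square: "summable (\<lambda>k. 1 / real (Suc k) ^ 2)"
proof -
  have "summable (\<lambda>n. inverse (real n ^ 2))" by (rule inverse_power_summable) simp
  hence "summable (\<lambda>n. inverse (real (Suc n) ^ 2))" by (subst summable_Suc_iff)
  thus ?thesis by (simp add: divide_inverse)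
qed

lemma zeta2_sums: "(\<lambda>k. 1 / real (Suc k) ^ 2) sums zeta2"
  unfolding zeta2_def using summable_inverse_Suc_square by (rule summable_sums)

lemma sH_summand_nonneg: "y \<ge> 0 \<Longrightarrow> 0 \<le> 1 / real (Suc k) - 1 / (real (Suc k) + y)"
  by (simp add: field_simps)

lemma sH_summable:
  assumes "y \<ge> 0" shows "summable (\<lambda>k. 1 / real (Suc k) - 1 / (real (Suc k) + y))"
proof (rule summable_comparison_test'[where g = "\<lambda>k. y * (1 / real (Suc k) ^ 2)"])
  show "summable (\<lambda>k. y * (1 / real (Suc k) ^ 2))"
    using summable_inverse_Suc_square by (rule summable_mult)
  fix n :: nat
  have "1 / real (Suc n) - 1 / (real (Suc n) + y) = y / (real (Suc n) * (real (Suc n) + y))"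
    using assms by (simp add: field_simps)
  also have "\<dots> \<le> y / (real (Suc n) * real (Suc n))"
    using assms by (intro divide_left_mono mult_left_mono mult_pos_pos) auto
  finally show "norm (1 / real (Suc n) - 1 / (real (Suc n) + y)) \<le> y * (1 / real (Suc n) ^ 2)"
    using sH_summand_nonneg[OF assms, of n] by (simp add: power2_eq_square)
qed

lemma sHm_summand_nonneg: "y \<ge> 0 \<Longrightarrow> 0 \<le> 1 / real (Suc k) ^ m - 1 / (real (Suc k) + y) ^ m"
  by (simp add: field_simps power_mono divide_le_eq_1 frac_le)

lemma sHm_summand_le:
  assumes "y \<ge> 0" "m \<ge> 2"
  shows "1 / real (Suc k) ^ m - 1 / (real (Suc k) + y) ^ m \<le> 1 / real (Suc k) ^ 2"
proof -
  have "1 / real (Suc k) ^ m \<le> 1 / real (Suc k) ^ 2"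
    using assms by (intro divide_left_mono power_increasing) auto
  moreover have "0 \<le> 1 / (real (Suc k) + y) ^ m" using assms by simp
  ultimately show ?thesis by linarith
qed

lemma sHm_summable:
  assumes "y \<ge> 0" "m \<ge> 2"
  shows "summable (\<lambda>k. 1 / real (Suc k) ^ m - 1 / (real (Suc k) + y) ^ m)"
  by (rule summable_comparison_test'[OF summable_inverse_Suc_square])
     (use sHm_summand_nonneg[OF assms(1)] sHm_summand_le[OF assms] in auto)

lemma sH_sums: "y \<ge> 0 \<Longrightarrow> (\<lambda>k. 1 / real (Suc k) - 1 / (real (Suc k) + y)) sums sH y"
  unfolding sH_def by (rule summable_sums, rule sH_summable)

lemma sHm_sums:
  "y \<ge> 0 \<Longrightarrow> m \<ge> 2 \<Longrightarrow> (\<lambda>k. 1 / real (Suc k) ^ m - 1 / (real (Suc k) + y) ^ m) sums sHm m y"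
  unfolding sHm_def by (rule summable_sums, rule sHm_summable)

lemma sH_0 [simp]: "sH 0 = 0"
  unfolding sH_def by simp

lemma sHm_0 [simp]: "sHm m 0 = 0"
  unfolding sHm_def by simp

lemma sH_nonneg: "y \<ge> 0 \<Longrightarrow> 0 \<le> sH y"
  unfolding sH_def by (intro suminf_nonneg sH_summable sH_summand_nonneg)

lemma sHm_nonneg: "y \<ge> 0 \<Longrightarrow> m \<ge> 2 \<Longrightarrow> 0 \<le> sHm m y"
  unfolding sHm_def by (intro suminf_nonneg sHm_summable sHm_summand_nonneg)

lemma sHm_le_zeta2: "y \<ge> 0 \<Longrightarrow> m \<ge> 2 \<Longrightarrow> sHm m y \<le> zeta2"
  unfolding sHm_def zeta2_def
  by (intro suminf_le sHm_summable summable_inverse_Suc_square sHm_summand_le)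

lemma sH_mono: "0 \<le> x \<Longrightarrow> x \<le> y \<Longrightarrow> sH x \<le> sH y"
  unfolding sH_def by (intro suminf_le sH_summable allI diff_left_mono divide_left_mono) auto

lemma sHm_mono: "0 \<le> x \<Longrightarrow> x \<le> y \<Longrightarrow> m \<ge> 2 \<Longrightarrow> sHm m x \<le> sHm m y"
  unfolding sHm_def
  by (intro suminf_le sHm_summable allI diff_left_mono divide_left_mono power_mono) auto

lemma sH_recurrence:
  assumes "x \<ge> 1" shows "sH x = sH (x - 1) + 1 / x"
proof -
  have "(\<lambda>k. (1 / real (Suc k) - 1 / (real (Suc k) + x))
          - (1 / real (Suc k) - 1 / (real (Suc k) + (x - 1)))) sums (sH x - sH (x - 1))"
    using assms by (intro sums_diff sH_sums) auto
  moreover have "(\<lambda>k. 1 / (real k + x) - 1 / (real (Suc k) + x)) sums (1 / (real 0 + x) - 0)"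
    by (rule telescope_sums') real_asymp
  ultimately have "sH x - sH (x - 1) = 1 / x"
    by (simp add: algebra_simps sums_iff)
  thus ?thesis by simp
qed

lemma sHm_recurrence:
  assumes "x \<ge> 1" "m \<ge> 2" shows "sHm m x = sHm m (x - 1) + 1 / x ^ m"
proof -
  have "(\<lambda>k. (1 / real (Suc k) ^ m - 1 / (real (Suc k) + x) ^ m)
          - (1 / real (Suc k) ^ m - 1 / (real (Suc k) + (x - 1)) ^ m)) sums (sHm m x - sHm m (x - 1))"
    using assms by (intro sums_diff sHm_sums) auto
  moreover have "(\<lambda>k. 1 / (real k + x) ^ m - 1 / (real (Suc k) + x) ^ m) sums (1 / (real 0 + x) ^ m - 0)"
  proof (rule telescope_sums')
    have "(\<lambda>k. (1 / (real k + x)) ^ m) \<longlonglongrightarrow> 0 ^ m"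
      by (intro tendsto_intros) real_asymp
    thus "(\<lambda>k. 1 / (real k + x) ^ m) \<longlonglongrightarrow> 0"
      using assms by (simp add: power_one_over power_0_left)
  qed
  ultimately have "sHm m x - sHm m (x - 1) = 1 / x ^ m"
    by (simp add: algebra_simps sums_iff)
  thus ?thesis by simp
qed

lemma sH_of_nat: "sH (real n) = harm n"
proof (induction n)
  case (Suc n)
  have "sH (real (Suc n)) = sH (real (Suc n) - 1) + 1 / real (Suc n)" by (rule sH_recurrence) simp
  thus ?case using Suc by (simp add: harm_Suc divide_inverse)
qed (simp add: harm_def)

lemma harm_le_1_plus_ln: "n \<ge> 1 \<Longrightarrow> harm n \<le> 1 + ln (real n)"
proof -
  assume "n \<ge> 1"
  then obtain m where "n = Suc m" by (cases n) auto
  moreover have "harm (Suc m) - ln (real (Suc m)) \<le> harm (Suc 0) - ln (real (Suc 0))"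
    using decseq_harm_diff_ln by (rule antimonoD) simp
  ultimately show ?thesis by (simp add: harm_def)
qed

lemma sH_le_1_plus_ln: assumes "y \<ge> 0" shows "sH y \<le> 1 + ln (y + 1)"
proof -
  define n where "n = nat \<lceil>y\<rceil>"
  have n: "y \<le> real n" "real n < y + 1" unfolding n_def using assms by linarith+
  have "sH y \<le> harm n" using sH_mono[OF assms n(1)] by (simp add: sH_of_nat)
  also have "harm n \<le> 1 + ln (y + 1)"
  proof (cases "n = 0")
    case False
    hence "harm n \<le> 1 + ln (real n)" by (intro harm_le_1_plus_ln) auto
    also have "ln (real n) \<le> ln (y + 1)" using False n by (subst ln_le_cancel_iff) auto
    finally show ?thesis by simp
  qed (use assms in \<open>simp add: harm_def\<close>)
  finally show ?thesis .
qed

lemma sH_bigo_ln: "sH \<in> O(\<lambda>y. 1 + ln (y + 1))"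
proof (rule landau_o.bigI[of 1])
  show "\<forall>\<^sub>F y in at_top. norm (sH y) \<le> 1 * norm (1 + ln (y + 1))"
    using eventually_ge_at_top[of "0::real"]
  proof eventually_elim
    case (elim y)
    thus ?case using sH_nonneg[OF elim] sH_le_1_plus_ln[OF elim] by simp
  qed
qed simp

lemma sH_bigo_sqrt: "sH \<in> O(sqrt)"
  using sH_bigo_ln by (rule landau_o.big_trans) real_asymp

lemma sH_squared_bigo_sqrt: "(\<lambda>y. sH y ^ 2) \<in> O(sqrt)"
  using landau_o.big_power[OF sH_bigo_ln, of 2] by (rule landau_o.big_trans) real_asymp

lemma sHm_bigo_sqrt:
  assumes "m \<ge> 2" shows "sHm m \<in> O(sqrt)"
proof -
  have "sHm m \<in> O(\<lambda>_. 1)"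
  proof (rule landau_o.bigI[of "max 1 zeta2"])
    show "\<forall>\<^sub>F y in at_top. norm (sHm m y) \<le> max 1 zeta2 * norm (1 :: real)"
      using eventually_ge_at_top[of "0::real"]
      by eventually_elim (use assms sHm_nonneg sHm_le_zeta2 in fastforce)
  qed simp
  thus ?thesis by (rule landau_o.big_trans) real_asymp
qed


section \<open>The series hsum\<close>

definition hsum :: "(real \<Rightarrow> real) \<Rightarrow> real \<Rightarrow> real" where
  "hsum f x = (\<Sum>m. f (real (Suc m) + x) * (1 / real (Suc m) - 1 / (real (Suc m) + x)))"

lemma hsum_summable:
  assumes f: "f \<in> O(sqrt)" and x: "x \<ge> 0"
  shows "summable (\<lambda>m. f (real (Suc m) + x) * (1 / real (Suc m) - 1 / (real (Suc m) + x)))"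
proof -
  have "(\<lambda>m. f (real (Suc m) + x)) \<in> O(\<lambda>m. sqrt (real (Suc m) + x))"
    by (rule landau_o.big.compose[OF f]) real_asymp
  hence "(\<lambda>m. f (real (Suc m) + x) * (1 / (real (Suc m) * (real (Suc m) + x))))
           \<in> O(\<lambda>m. sqrt (real (Suc m) + x) * (1 / (real (Suc m) * (real (Suc m) + x))))"
    by (rule landau_o.big.mult_right)
  also have "(\<lambda>m. sqrt (real (Suc m) + x) * (1 / (real (Suc m) * (real (Suc m) + x))))
               \<in> O(\<lambda>m. real m powr (- 3 / 2))"
    by real_asymp
  finally have "summable (\<lambda>m. f (real (Suc m) + x) * (1 / (real (Suc m) * (real (Suc m) + x))))"
    by (rule summable_comparison_test_bigo[rotated]) (simp add: summable_real_powr_iff)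
  hence "summable (\<lambda>m. x * (f (real (Suc m) + x) * (1 / (real (Suc m) * (real (Suc m) + x)))))"
    by (rule summable_mult)
  moreover have "x * (f (real (Suc m) + x) * (1 / (real (Suc m) * (real (Suc m) + x))))
      = f (real (Suc m) + x) * (1 / real (Suc m) - 1 / (real (Suc m) + x))" for m
    using x by (simp add: field_simps)
  ultimately show ?thesis by simp
qed

lemma hsum_sums:
  "f \<in> O(sqrt) \<Longrightarrow> x \<ge> 0 \<Longrightarrow>
     (\<lambda>m. f (real (Suc m) + x) * (1 / real (Suc m) - 1 / (real (Suc m) + x))) sums hsum f x"
  unfolding hsum_def by (rule summable_sums, rule hsum_summable)

lemma bigo_sqrt_div_tendsto_0:
  assumes "f \<in> O(sqrt)"
  shows "(\<lambda>m. f (real m + x) / (real m + x)) \<longlonglongrightarrow> 0"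
proof -
  have "f \<in> o(\<lambda>y. y)" using assms by (rule landau_o.big_small_trans) real_asymp
  hence "((\<lambda>y. f y / y) \<longlongrightarrow> 0) at_top" by (rule smalloD_tendsto)
  moreover have "filterlim (\<lambda>m. real m + x) at_top sequentially" by real_asymp
  ultimately show ?thesis by (rule filterlim_compose)
qed

text \<open>Comparing the series for hsum f x and hsum f (x - 1) termwise leaves the
  series of the increments of f plus a telescoping series.\<close>
lemma hsum_diff:
  assumes f: "f \<in> O(sqrt)" and x: "x \<ge> 1"
    and D: "(\<lambda>n. (f (real (Suc n) + x) - f (real (Suc n) + x - 1)) / real (Suc n)) sums D"
  shows "hsum f x - hsum f (x - 1) = D + f x / x"
proof -
  let ?g = "\<lambda>m. f (real m + x) / (real m + x)"
  have alg: "A * (1 / m - 1 / p) - B * (1 / m - 1 / q) = (A - B) / m + (B / q - A / p)"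
    for A B m p q :: real
    by (simp add: divide_inverse algebra_simps)
  have "(\<lambda>m. ?g m - ?g (Suc m)) sums (?g 0 - 0)"
    by (rule telescope_sums') (rule bigo_sqrt_div_tendsto_0[OF f])
  with D have "(\<lambda>n. (f (real (Suc n) + x) - f (real (Suc n) + x - 1)) / real (Suc n)
      + (?g n - ?g (Suc n))) sums (D + f x / x)"
    by (simp add: sums_add)
  moreover have "(\<lambda>n. f (real (Suc n) + x) * (1 / real (Suc n) - 1 / (real (Suc n) + x))
      - f (real (Suc n) + (x - 1)) * (1 / real (Suc n) - 1 / (real (Suc n) + (x - 1))))
      sums (hsum f x - hsum f (x - 1))"
    using x by (intro sums_diff hsum_sums[OF f]) auto
  moreover have "f (real (Suc n) + x) * (1 / real (Suc n) - 1 / (real (Suc n) + x))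
      - f (real (Suc n) + (x - 1)) * (1 / real (Suc n) - 1 / (real (Suc n) + (x - 1)))
      = (f (real (Suc n) + x) - f (real (Suc n) + x - 1)) / real (Suc n) + (?g n - ?g (Suc n))"
    for n
    using alg by (simp add: add_diff_eq)
  ultimately show ?thesis by (simp add: sums_iff)
qed

text \<open>The first s terms of the series defining hsum f c, in the form in which they occur
  in the theorem.\<close>
definition hsum_head :: "(real \<Rightarrow> real) \<Rightarrow> real \<Rightarrow> nat \<Rightarrow> real" where
  "hsum_head f c s = c * (\<Sum>i=1..s. f (c + real i) / (real i * (c + real i)))"

lemma hsum_shift_sums:
  assumes f: "f \<in> O(sqrt)" and a: "a \<ge> real s"
  shows "(\<lambda>n. f (real (Suc n) + a) * (1 / (real (Suc n) + real s) - 1 / (real (Suc n) + a)))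
           sums (hsum f (a - real s) - hsum_head f (a - real s) s)"
proof -
  define c where "c = a - real s"
  define g where "g = (\<lambda>m. f (real (Suc m) + c) * (1 / real (Suc m) - 1 / (real (Suc m) + c)))"
  have c: "c \<ge> 0" using a unfolding c_def by simp
  have head: "(\<Sum>m<s. g m) = hsum_head f c s"
    unfolding hsum_head_def One_nat_def sum.atLeast1_atMost_eq sum_distrib_left
    using c by (intro sum.cong refl) (simp add: g_def field_simps)
  have "g sums hsum f c" unfolding g_def by (rule hsum_sums[OF f c])
  hence "(\<lambda>m. g (m + s)) sums (hsum f c - hsum_head f c s)"
    by (subst sums_iff_shift) (simp add: head)
  moreover have "g (n + s)
      = f (real (Suc n) + a) * (1 / (real (Suc n) + real s) - 1 / (real (Suc n) + a))" for n
    by (simp add: g_def c_def algebra_simps)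
  ultimately show ?thesis by (simp add: c_def)
qed


section \<open>Closed form for f = H\<close>

lemma eq_of_equal_increments_mono:
  fixes U P :: "real \<Rightarrow> real"
  assumes step: "\<And>x. x \<ge> 1 \<Longrightarrow> U x - U (x - 1) = P x - P (x - 1)"
    and zero: "U 0 = P 0"
    and mono: "mono_on {0..} U" "mono_on {0..} P"
    and lim: "(\<lambda>n. P (real n + 1) - P (real n)) \<longlonglongrightarrow> 0"
    and x: "x \<ge> 0"
  shows "U x = P x"
proof -
  have periodic: "U (y + real n) - P (y + real n) = U y - P y" if "y \<ge> 0" for y n
  proof (induction n)
    case (Suc n)
    have "U (y + real (Suc n)) - U (y + real (Suc n) - 1)
          = P (y + real (Suc n)) - P (y + real (Suc n) - 1)"
      using that by (intro step) simp
    with Suc show ?case by (simp add: add.assoc)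
  qed simp
  have at_nat: "U (real n) = P (real n)" for n
    using periodic[of 0 n] zero by simp
  define F where "F = nat \<lfloor>x\<rfloor>"
  txt \<open>On [M, M + 1] both U and P lie between their common values at M and M + 1.\<close>
  have bound: "\<bar>U x - P x\<bar> \<le> P (real (n + F) + 1) - P (real (n + F))" for n
  proof -
    define M where "M = n + F"
    have M: "real M \<le> x + real n" "x + real n \<le> real M + 1"
      unfolding M_def F_def using x by linarith+
    have "U (real M) \<le> U (x + real n)" "U (x + real n) \<le> U (real M + 1)"
         "P (real M) \<le> P (x + real n)" "P (x + real n) \<le> P (real M + 1)"
      using M x by (auto intro!: mono_onD[OF mono(1)] mono_onD[OF mono(2)])
    moreover have "U (real M + 1) = P (real M + 1)" using at_nat[of "Suc M"] by (simp add: add.commute)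
    ultimately show ?thesis
      using periodic[OF x, of n] at_nat[of M] unfolding M_def by linarith
  qed
  have "(\<lambda>n. P (real (n + F) + 1) - P (real (n + F))) \<longlonglongrightarrow> 0"
    using LIMSEQ_ignore_initial_segment[OF lim, of F] by simp
  hence "\<bar>U x - P x\<bar> \<le> 0"
    by (rule LIMSEQ_le_const) (use bound in blast)
  thus ?thesis by simp
qed

lemma hsum_sH_mono: "mono_on {0..} (hsum sH)"
proof (rule mono_onI)
  fix x y :: real assume "x \<in> {0..}" "y \<in> {0..}" "x \<le> y"
  hence xy: "0 \<le> x" "x \<le> y" by auto
  show "hsum sH x \<le> hsum sH y"
    unfolding hsum_def
  proof (intro suminf_le allI hsum_summable[OF sH_bigo_sqrt] mult_mono)
    fix n
    show "sH (real (Suc n) + x) \<le> sH (real (Suc n) + y)" using xy by (intro sH_mono) auto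
    show "1 / real (Suc n) - 1 / (real (Suc n) + x) \<le> 1 / real (Suc n) - 1 / (real (Suc n) + y)"
      using xy by (intro diff_left_mono divide_left_mono) auto
    show "0 \<le> sH (real (Suc n) + y)" using xy by (intro sH_nonneg) auto
    show "0 \<le> 1 / real (Suc n) - 1 / (real (Suc n) + x)" using xy by (intro sH_summand_nonneg)
  qed (use xy in auto)
qed

lemma sums_inverse_Suc_mult_Suc_plus:
  assumes "x > 0" shows "(\<lambda>n. 1 / (real (Suc n) * (real (Suc n) + x))) sums (sH x / x)"
proof -
  have "(\<lambda>n. (1 / real (Suc n) - 1 / (real (Suc n) + x)) / x) sums (sH x / x)"
    using assms by (intro sums_divide sH_sums) auto
  moreover have "(1 / real (Suc n) - 1 / (real (Suc n) + x)) / x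
      = 1 / (real (Suc n) * (real (Suc n) + x))" for n
  proof -
    have "1 / real (Suc n) - 1 / (real (Suc n) + x) = x / (real (Suc n) * (real (Suc n) + x))"
      using assms by (simp add: field_simps)
    thus ?thesis using assms by simp
  qed
  ultimately show ?thesis by simp
qed

lemma hsum_sH_step:
  assumes "x \<ge> 1" shows "hsum sH x - hsum sH (x - 1) = 2 * sH x / x"
proof -
  have "(sH (real (Suc n) + x) - sH (real (Suc n) + x - 1)) / real (Suc n)
      = 1 / (real (Suc n) * (real (Suc n) + x))" for n
    using sH_recurrence[of "real (Suc n) + x"] assms by simp
  hence "(\<lambda>n. (sH (real (Suc n) + x) - sH (real (Suc n) + x - 1)) / real (Suc n)) sums (sH x / x)"
    using sums_inverse_Suc_mult_Suc_plus[of x] assms by simp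
  from hsum_diff[OF sH_bigo_sqrt assms this] show ?thesis by simp
qed

lemma hsum_sH:
  assumes "x \<ge> 0" shows "hsum sH x = sH x ^ 2 + sHm 2 x"
proof -
  have step: "(sH y ^ 2 + sHm 2 y) - (sH (y - 1) ^ 2 + sHm 2 (y - 1)) = 2 * sH y / y"
    if "y \<ge> 1" for y
  proof -
    have H: "sH (y - 1) = sH y - 1 / y" and H2: "sHm 2 (y - 1) = sHm 2 y - 1 / y ^ 2"
      using sH_recurrence[OF that] sHm_recurrence[OF that, of 2] by simp_all
    show ?thesis unfolding H H2 using that by (simp add: field_simps power2_eq_square)
  qed
  show ?thesis
  proof (rule eq_of_equal_increments_mono[OF _ _ hsum_sH_mono _ _ assms])
    show "hsum sH y - hsum sH (y - 1) = (sH y ^ 2 + sHm 2 y) - (sH (y - 1) ^ 2 + sHm 2 (y - 1))"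
      if "y \<ge> 1" for y
      using hsum_sH_step[OF that] step[OF that] by simp
    show "hsum sH 0 = sH 0 ^ 2 + sHm 2 0" by (simp add: hsum_def)
    show "mono_on {0..} (\<lambda>y. sH y ^ 2 + sHm 2 y)"
      by (intro mono_onI add_mono power_mono sH_mono sH_nonneg sHm_mono) auto
    have "(\<lambda>n. sH (real n + 1) / (real n + 1)) \<longlonglongrightarrow> 0"
      by (rule bigo_sqrt_div_tendsto_0[OF sH_bigo_sqrt])
    hence "(\<lambda>n. 2 * sH (real n + 1) / (real n + 1)) \<longlonglongrightarrow> 0"
      using tendsto_mult_right_zero by fastforce
    thus "(\<lambda>n. (sH (real n + 1) ^ 2 + sHm 2 (real n + 1))
        - (sH (real n) ^ 2 + sHm 2 (real n))) \<longlonglongrightarrow> 0"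
      using step[of "real n + 1" for n] by simp
  qed
qed


section \<open>Differences for f = H^(2) and f = H^2\<close>

lemma sums_inverse_Suc_mult_square:
  assumes x: "x > 0"
  shows "(\<lambda>n. 1 / (real (Suc n) * (real (Suc n) + x) ^ 2))
           sums (sH x / x ^ 2 - (zeta2 - sHm 2 x) / x)"
proof -
  have "(\<lambda>n. (1 / real (Suc n) - 1 / (real (Suc n) + x)) / x ^ 2
      - (1 / real (Suc n) ^ 2 - (1 / real (Suc n) ^ 2 - 1 / (real (Suc n) + x) ^ 2)) / x)
      sums (sH x / x ^ 2 - (zeta2 - sHm 2 x) / x)"
    using x by (intro sums_diff sums_divide zeta2_sums sH_sums sHm_sums) auto
  moreover have "(1 / m - 1 / (m + x)) / x ^ 2 - (1 / m ^ 2 - (1 / m ^ 2 - 1 / (m + x) ^ 2)) / x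
      = 1 / (m * (m + x) ^ 2)" if "m > 0" for m :: real
    using that x by (simp add: divide_simps) (simp add: algebra_simps power2_eq_square)
  ultimately show ?thesis by simp
qed

lemma hsum_sHm2_step:
  assumes x: "x \<ge> 1"
  shows "hsum (sHm 2) x - hsum (sHm 2) (x - 1)
    = (2 * sHm 3 x + 2 * sH x * sHm 2 x - sH x * zeta2)
      - (2 * sHm 3 (x - 1) + 2 * sH (x - 1) * sHm 2 (x - 1) - sH (x - 1) * zeta2)
      - sH x / x ^ 2"
proof -
  have "(sHm 2 (real (Suc n) + x) - sHm 2 (real (Suc n) + x - 1)) / real (Suc n)
      = 1 / (real (Suc n) * (real (Suc n) + x) ^ 2)" for n
    using sHm_recurrence[of "real (Suc n) + x" 2] x by simp
  hence "(\<lambda>n. (sHm 2 (real (Suc n) + x) - sHm 2 (real (Suc n) + x - 1)) / real (Suc n))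
      sums (sH x / x ^ 2 - (zeta2 - sHm 2 x) / x)"
    using sums_inverse_Suc_mult_square[of x] x by simp
  from hsum_diff[OF sHm_bigo_sqrt x this]
  have diff: "hsum (sHm 2) x - hsum (sHm 2) (x - 1) = sH x / x ^ 2 - (zeta2 - sHm 2 x) / x + sHm 2 x / x"
    by simp
  have H: "sH (x - 1) = sH x - 1 / x" and H2: "sHm 2 (x - 1) = sHm 2 x - 1 / x ^ 2"
    and H3: "sHm 3 (x - 1) = sHm 3 x - 1 / x ^ 3"
    using sH_recurrence[OF x] sHm_recurrence[OF x, of 2] sHm_recurrence[OF x, of 3] by simp_all
  show ?thesis unfolding diff H H2 H3
    using x by (simp add: field_simps power2_eq_square power3_eq_cube)
qed

lemma hsum_sH_squared_step:
  assumes x: "x \<ge> 1"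
  shows "hsum (\<lambda>y. sH y ^ 2) x - hsum (\<lambda>y. sH y ^ 2) (x - 1)
    = (sH x ^ 3 + sH x * sHm 2 x + sH x * zeta2)
      - (sH (x - 1) ^ 3 + sH (x - 1) * sHm 2 (x - 1) + sH (x - 1) * zeta2)
      + sH x / x ^ 2"
proof -
  have "(sH (real (Suc n) + x) ^ 2 - sH (real (Suc n) + x - 1) ^ 2) / real (Suc n)
      = 2 / x * (sH (real (Suc n) + x) * (1 / real (Suc n) - 1 / (real (Suc n) + x)))
        - 1 / (real (Suc n) * (real (Suc n) + x) ^ 2)" for n
  proof -
    have "(H ^ 2 - (H - 1 / (m + x)) ^ 2) / m
        = 2 / x * (H * (1 / m - 1 / (m + x))) - 1 / (m * (m + x) ^ 2)"
      if "m > 0" for H m :: real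
      using that x by (simp add: divide_simps) (simp add: algebra_simps power2_eq_square)
    moreover have "sH (real (Suc n) + x - 1) = sH (real (Suc n) + x) - 1 / (real (Suc n) + x)"
      using sH_recurrence[of "real (Suc n) + x"] x by simp
    ultimately show ?thesis by simp
  qed
  moreover have "(\<lambda>n. 2 / x * (sH (real (Suc n) + x) * (1 / real (Suc n) - 1 / (real (Suc n) + x)))
        - 1 / (real (Suc n) * (real (Suc n) + x) ^ 2))
      sums (2 / x * hsum sH x - (sH x / x ^ 2 - (zeta2 - sHm 2 x) / x))"
    using x by (intro sums_diff sums_mult hsum_sums sH_bigo_sqrt sums_inverse_Suc_mult_square) auto
  ultimately have "(\<lambda>n. (sH (real (Suc n) + x) ^ 2 - sH (real (Suc n) + x - 1) ^ 2) / real (Suc n))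
      sums (2 / x * hsum sH x - (sH x / x ^ 2 - (zeta2 - sHm 2 x) / x))"
    by simp
  from hsum_diff[OF sH_squared_bigo_sqrt x] this
  have diff: "hsum (\<lambda>y. sH y ^ 2) x - hsum (\<lambda>y. sH y ^ 2) (x - 1)
      = 2 / x * hsum sH x - (sH x / x ^ 2 - (zeta2 - sHm 2 x) / x) + sH x ^ 2 / x"
    by simp
  have H: "sH (x - 1) = sH x - 1 / x" and H2: "sHm 2 (x - 1) = sHm 2 x - 1 / x ^ 2"
    using sH_recurrence[OF x] sHm_recurrence[OF x, of 2] by simp_all
  have U: "hsum sH x = sH x ^ 2 + sHm 2 x" using x by (intro hsum_sH) simp
  show ?thesis unfolding diff H H2 U
    using x by (simp add: field_simps power2_eq_square power3_eq_cube)
qed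

lemma telescope_unit_steps:
  fixes V G c :: "real \<Rightarrow> real"
  assumes step: "\<And>x. x \<ge> 1 \<Longrightarrow> V x - V (x - 1) = G x - G (x - 1) + c x" and b: "b \<ge> 0"
  shows "V (b + real j) - V b = G (b + real j) - G b + (\<Sum>i=1..j. c (b + real i))"
proof (induction j)
  case (Suc j)
  have "V (b + real (Suc j)) - V (b + real (Suc j) - 1)
      = G (b + real (Suc j)) - G (b + real (Suc j) - 1) + c (b + real (Suc j))"
    using b by (intro step) auto
  with Suc show ?case by simp
qed simp


section \<open>Partial fractions of the inverse binomial coefficient\<close>

lemma alternating_binomial_sum_Suc:
  fixes g :: "nat \<Rightarrow> real"
  shows "(\<Sum>j\<le>Suc n. (-1) ^ j * real (Suc n choose j) * g j)
       = (\<Sum>j\<le>n. (-1) ^ j * real (n choose j) * (g j - g (Suc j)))"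
proof -
  have shift: "(\<Sum>j\<le>Suc n. h j) = h 0 + (\<Sum>i\<le>n. h (Suc i))" for h :: "nat \<Rightarrow> real"
    by (rule sum.atMost_Suc_shift)
  have "(\<Sum>j\<le>Suc n. (-1) ^ j * real (Suc n choose j) * g j)
      = g 0 + (\<Sum>i\<le>n. (-1) ^ Suc i * real (n choose Suc i) * g (Suc i))
        + (\<Sum>i\<le>n. (-1) ^ Suc i * real (n choose i) * g (Suc i))"
    by (subst shift) (simp add: sum.distrib[symmetric] algebra_simps)
  also have "g 0 + (\<Sum>i\<le>n. (-1) ^ Suc i * real (n choose Suc i) * g (Suc i))
      = (\<Sum>j\<le>Suc n. (-1) ^ j * real (n choose j) * g j)"
    by (subst shift) simp
  also have "\<dots> = (\<Sum>j\<le>n. (-1) ^ j * real (n choose j) * g j)"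
    by simp
  finally show ?thesis
    by (simp add: right_diff_distrib sum_subtractf sum_negf)
qed

lemma fact_div_pochhammer_partial_fractions:
  "x > 0 \<Longrightarrow> fact n / pochhammer x (Suc n) = (\<Sum>j\<le>n. (-1) ^ j * real (n choose j) / (x + real j))"
proof (induction n arbitrary: x)
  case (Suc n)
  have "(\<Sum>j\<le>Suc n. (-1) ^ j * real (Suc n choose j) / (x + real j))
      = (\<Sum>j\<le>n. (-1) ^ j * real (n choose j) * (1 / (x + real j) - 1 / (x + 1 + real j)))"
    using alternating_binomial_sum_Suc[of n "\<lambda>j. 1 / (x + real j)"] by (simp add: add_ac)
  also have "\<dots> = fact n / pochhammer x (Suc n) - fact n / pochhammer (x + 1) (Suc n)"
    using Suc.IH[of x] Suc.IH[of "x + 1"] Suc.prems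
    by (simp add: sum_subtractf algebra_simps)
  also have "\<dots> = fact (Suc n) / pochhammer x (Suc (Suc n))"
  proof -
    define Q where "Q = pochhammer (x + 1) n"
    have "Q > 0" unfolding Q_def using Suc.prems by (intro pochhammer_pos) simp
    have P1: "pochhammer x (Suc n) = x * Q"
      unfolding Q_def by (rule pochhammer_rec)
    have P2: "pochhammer (x + 1) (Suc n) = Q * (x + 1 + real n)"
      unfolding Q_def by (rule pochhammer_Suc)
    have P3: "pochhammer x (Suc (Suc n)) = x * (Q * (x + 1 + real n))"
      by (simp only: pochhammer_rec[of x "Suc n"] P2)
    have "x + 1 + real n > 0" using Suc.prems by simp
    with \<open>Q > 0\<close> Suc.prems show ?thesis unfolding P1 P2 P3
      by (simp add: divide_simps) (simp add: algebra_simps)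
  qed
  finally show ?case ..
qed simp

lemma inverse_binomial_partial_fractions:
  assumes k: "k \<ge> 2"
  shows "1 / real ((N + k + r) choose k) = real k * (\<Sum>j=1..k-1. (-1) ^ (j+1) * real ((k-1) choose j) *
           (1 / (real N + real r + 1) - 1 / (real N + real r + 1 + real j)))"
proof -
  define x where "x = real N + real r + 1"
  have x: "x > 0" unfolding x_def by simp
  obtain k' where k': "k = Suc k'" "k' \<ge> 1" using k by (cases k) auto
  have "real ((N + k + r) choose k) = pochhammer x k / fact k"
    unfolding binomial_gbinomial gbinomial_pochhammer' x_def by (simp add: add_ac)
  hence "1 / real ((N + k + r) choose k) = real k * (fact k' / pochhammer x (Suc k'))"
    using k' pochhammer_pos[OF x, of k] by simp
  also have "fact k' / pochhammer x (Suc k')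
      = (\<Sum>j\<le>k'. (-1) ^ j * real (k' choose j) / (x + real j))
        - (\<Sum>j\<le>k'. (-1) ^ j * real (k' choose j)) / x"
    using fact_div_pochhammer_partial_fractions[OF x, of k'] choose_alternating_sum[of k', where 'a=real] k'
    by simp
  also have "\<dots> = (\<Sum>j\<le>k'. (-1) ^ j * real (k' choose j) * (1 / (x + real j) - 1 / x))"
    by (simp add: sum_divide_distrib sum_subtractf[symmetric] algebra_simps)
  also have "\<dots> = (\<Sum>j=1..k'. (-1) ^ j * real (k' choose j) * (1 / (x + real j) - 1 / x))"
    by (simp add: atMost_atLeast0 sum.atLeast_Suc_atMost)
  also have "\<dots> = (\<Sum>j=1..k-1. (-1) ^ (j+1) * real ((k-1) choose j) * (1 / x - 1 / (x + real j)))"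
    using k' by (intro sum.cong) (auto simp: algebra_simps)
  finally show ?thesis unfolding x_def .
qed


lemma binomial_series_sums_hsum_tails:
  assumes k: "k \<ge> 2" and f: "f \<in> O(sqrt)" and a: "a > real (k + r)"
    and E: "\<And>j. j \<in> {1..k-1} \<Longrightarrow>
      (hsum f (a - r - 1) - hsum_head f (a - r - 1) (r + 1))
      - (hsum f (a - r - 1 - j) - hsum_head f (a - r - 1 - j) (r + 1 + j)) = E j"
  shows "(\<lambda>n. f (real (Suc n) + a) / real ((Suc n + k + r) choose k)) sums
      (real k * (\<Sum>j=1..k-1. (-1) ^ (j+1) * real ((k-1) choose j) * E j))"
proof -
  have "(\<lambda>n. f (real (Suc n) + a) * (1 / (real (Suc n) + real r + 1)
      - 1 / (real (Suc n) + real r + 1 + real j))) sums E j" if j: "j \<in> {1..k-1}" for j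
  proof -
    have "(\<lambda>n. f (real (Suc n) + a) * (1 / (real (Suc n) + real (r + 1)) - 1 / (real (Suc n) + a))
        - f (real (Suc n) + a) * (1 / (real (Suc n) + real (r + 1 + j)) - 1 / (real (Suc n) + a)))
        sums ((hsum f (a - real (r + 1)) - hsum_head f (a - real (r + 1)) (r + 1))
          - (hsum f (a - real (r + 1 + j)) - hsum_head f (a - real (r + 1 + j)) (r + 1 + j)))"
      using a j by (intro sums_diff hsum_shift_sums[OF f]) auto
    thus ?thesis using E[OF j] by (simp add: algebra_simps)
  qed
  hence "(\<lambda>n. real k * (\<Sum>j=1..k-1. (-1) ^ (j+1) * real ((k-1) choose j) *
      (f (real (Suc n) + a) * (1 / (real (Suc n) + real r + 1)
        - 1 / (real (Suc n) + real r + 1 + real j)))))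
      sums (real k * (\<Sum>j=1..k-1. (-1) ^ (j+1) * real ((k-1) choose j) * E j))"
    by (intro sums_mult sums_sum) auto
  moreover have "real k * (\<Sum>j=1..k-1. (-1) ^ (j+1) * real ((k-1) choose j) *
      (f (real (Suc n) + a) * (1 / (real (Suc n) + real r + 1)
        - 1 / (real (Suc n) + real r + 1 + real j))))
      = f (real (Suc n) + a) / real ((Suc n + k + r) choose k)" for n
  proof -
    have "f (real (Suc n) + a) / real ((Suc n + k + r) choose k)
        = f (real (Suc n) + a) * (1 / real ((Suc n + k + r) choose k))"
      by simp
    also note inverse_binomial_partial_fractions[OF k, of "Suc n" r]
    finally show ?thesis by (simp add: sum_distrib_left sum_distrib_right algebra_simps)
  qed
  ultimately show ?thesis by simp
qed


lemma hsum_head_eq: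
  "(real (r + 1 + j) - a) * (\<Sum>i=1..r+1+j. F (a + i - r - 1 - j) / (real i * (a + i - r - 1 - j)))
     = - hsum_head F (a - r - 1 - j) (r + 1 + j)"
proof -
  have sum_eq: "(\<Sum>i=1..r+1+j. F (a + i - r - 1 - j) / (real i * (a + i - r - 1 - j)))
      = (\<Sum>i=1..r+1+j. F (a - r - 1 - j + i) / (real i * (a - r - 1 - j + i)))"
    by (intro sum.cong refl) (simp add: algebra_simps)
  have "real (r + 1 + j) - a = - (a - r - 1 - j)" by simp
  thus ?thesis unfolding hsum_head_def sum_eq by (simp only: mult_minus_left)
qed

lemma hsum_tails_sH:
  fixes r j :: nat and a :: real
  assumes "a - r - 1 - j \<ge> 0"
  shows "(hsum sH (a - r - 1) - hsum_head sH (a - r - 1) (r + 1))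
      - (hsum sH (a - r - 1 - j) - hsum_head sH (a - r - 1 - j) (r + 1 + j))
    = sH (a - r - 1) ^ 2 + sHm 2 (a - r - 1)
          - sH (a - r - 1 - j) ^ 2 - sHm 2 (a - r - 1 - j)
          - (real (r + 1 + j) - a) * (\<Sum>i=1..r+1+j. sH (a + i - r - 1 - j) / (real i * (a + i - r - 1 - j)))
          + (real (r + 1) - a) * (\<Sum>i=1..r+1. sH (a + i - r - 1) / (real i * (a + i - r - 1)))"
  using assms hsum_sH[of "a - r - 1"] hsum_sH[of "a - r - 1 - j"]
    hsum_head_eq[of r j a sH] hsum_head_eq[of r 0 a sH]
  by simp


lemma sum_shifted_arg_eq:
  fixes r j :: nat and a :: real
  shows "(\<Sum>i=1..j. F (a + i - r - 1 - j)) = (\<Sum>i=1..j. F (a - r - 1 - j + i))"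
  by (intro sum.cong refl arg_cong[where f = F]) (simp add: algebra_simps)

lemma hsum_tails_sHm2:
  fixes r j :: nat and a :: real
  assumes b: "a - r - 1 - j \<ge> 0"
  shows "(hsum (sHm 2) (a - r - 1) - hsum_head (sHm 2) (a - r - 1) (r + 1))
      - (hsum (sHm 2) (a - r - 1 - j) - hsum_head (sHm 2) (a - r - 1 - j) (r + 1 + j))
    = (real (r + 1) - a) * (\<Sum>i=1..r+1. sHm 2 (a + i - r - 1) / (real i * (a + i - r - 1)))
          - (real (r + 1 + j) - a) * (\<Sum>i=1..r+1+j. sHm 2 (a + i - r - 1 - j) / (real i * (a + i - r - 1 - j)))
          - (\<Sum>i=1..j. sH (a + i - r - 1 - j) / (a + i - r - 1 - j) ^ 2)
          + 2 * sHm 3 (a - r - 1) + sH (a - r - 1 - j) * zeta2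
          + 2 * sH (a - r - 1) * sHm 2 (a - r - 1)
          - 2 * sHm 3 (a - r - 1 - j) - sH (a - r - 1) * zeta2
          - 2 * sH (a - r - 1 - j) * sHm 2 (a - r - 1 - j)"
proof -
  have "hsum (sHm 2) (a - r - 1 - j + j) - hsum (sHm 2) (a - r - 1 - j)
      = (2 * sHm 3 (a - r - 1 - j + j) + 2 * sH (a - r - 1 - j + j) * sHm 2 (a - r - 1 - j + j)
          - sH (a - r - 1 - j + j) * zeta2)
        - (2 * sHm 3 (a - r - 1 - j) + 2 * sH (a - r - 1 - j) * sHm 2 (a - r - 1 - j)
          - sH (a - r - 1 - j) * zeta2)
        + (\<Sum>i=1..j. - (sH (a - r - 1 - j + i) / (a - r - 1 - j + i) ^ 2))"
    by (rule telescope_unit_steps[OF _ b]) (simp add: hsum_sHm2_step)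
  thus ?thesis
    using hsum_head_eq[of r j a "sHm 2"] hsum_head_eq[of r 0 a "sHm 2"]
      sum_shifted_arg_eq[of "\<lambda>y. sH y / y ^ 2" a r j]
    by (simp add: sum_negf)
qed

lemma hsum_tails_sH_squared:
  fixes r j :: nat and a :: real
  assumes b: "a - r - 1 - j \<ge> 0"
  shows "(hsum (\<lambda>y. sH y ^ 2) (a - r - 1) - hsum_head (\<lambda>y. sH y ^ 2) (a - r - 1) (r + 1))
      - (hsum (\<lambda>y. sH y ^ 2) (a - r - 1 - j) - hsum_head (\<lambda>y. sH y ^ 2) (a - r - 1 - j) (r + 1 + j))
    = sH (a - r - 1) ^ 3 + sH (a - r - 1) * sHm 2 (a - r - 1) + sH (a - r - 1) * zeta2
          - sH (a - r - 1 - j) ^ 3 - sH (a - r - 1 - j) * sHm 2 (a - r - 1 - j) - sH (a - r - 1 - j) * zeta2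
          + (real (r + 1) - a) * (\<Sum>i=1..r+1. sH (a + i - r - 1) ^ 2 / (real i * (a + i - r - 1)))
          + (\<Sum>i=1..j. sH (a + i - r - 1 - j) / (a + i - r - 1 - j) ^ 2)
          - (real (r + 1 + j) - a) * (\<Sum>i=1..r+1+j. sH (a + i - r - 1 - j) ^ 2 / (real i * (a + i - r - 1 - j)))"
proof -
  have "hsum (\<lambda>y. sH y ^ 2) (a - r - 1 - j + j) - hsum (\<lambda>y. sH y ^ 2) (a - r - 1 - j)
      = (sH (a - r - 1 - j + j) ^ 3 + sH (a - r - 1 - j + j) * sHm 2 (a - r - 1 - j + j)
          + sH (a - r - 1 - j + j) * zeta2)
        - (sH (a - r - 1 - j) ^ 3 + sH (a - r - 1 - j) * sHm 2 (a - r - 1 - j)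
          + sH (a - r - 1 - j) * zeta2)
        + (\<Sum>i=1..j. sH (a - r - 1 - j + i) / (a - r - 1 - j + i) ^ 2)"
    by (rule telescope_unit_steps[OF _ b]) (simp add: hsum_sH_squared_step)
  thus ?thesis
    using hsum_head_eq[of r j a "\<lambda>y. sH y ^ 2"] hsum_head_eq[of r 0 a "\<lambda>y. sH y ^ 2"]
      sum_shifted_arg_eq[of "\<lambda>y. sH y / y ^ 2" a r j]
    by simp
qed


theorem mainTheorem17:
  fixes k r :: nat and a :: real
  assumes "k \<ge> 2" and "a > real (k + r)"
  shows
   "(\<lambda>n. sH (real (Suc n) + a) / real ((Suc n + k + r) choose k)) sums
      (real k * (\<Sum>j=1..k-1. (-1) ^ (j+1) * real ((k-1) choose j) *
        ( sH (a - r - 1) ^ 2 + sHm 2 (a - r - 1)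
          - sH (a - r - 1 - j) ^ 2 - sHm 2 (a - r - 1 - j)
          - (real (r + 1 + j) - a) * (\<Sum>i=1..r+1+j. sH (a + i - r - 1 - j) / (real i * (a + i - r - 1 - j)))
          + (real (r + 1) - a) * (\<Sum>i=1..r+1. sH (a + i - r - 1) / (real i * (a + i - r - 1))))))
    \<and> (\<lambda>n. sHm 2 (real (Suc n) + a) / real ((Suc n + k + r) choose k)) sums
      (real k * (\<Sum>j=1..k-1. (-1) ^ (j+1) * real ((k-1) choose j) *
        ( (real (r + 1) - a) * (\<Sum>i=1..r+1. sHm 2 (a + i - r - 1) / (real i * (a + i - r - 1)))
          - (real (r + 1 + j) - a) * (\<Sum>i=1..r+1+j. sHm 2 (a + i - r - 1 - j) / (real i * (a + i - r - 1 - j)))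
          - (\<Sum>i=1..j. sH (a + i - r - 1 - j) / (a + i - r - 1 - j) ^ 2)
          + 2 * sHm 3 (a - r - 1) + sH (a - r - 1 - j) * zeta2
          + 2 * sH (a - r - 1) * sHm 2 (a - r - 1)
          - 2 * sHm 3 (a - r - 1 - j) - sH (a - r - 1) * zeta2
          - 2 * sH (a - r - 1 - j) * sHm 2 (a - r - 1 - j))))
    \<and> (\<lambda>n. sH (real (Suc n) + a) ^ 2 / real ((Suc n + k + r) choose k)) sums
      (real k * (\<Sum>j=1..k-1. (-1) ^ (j+1) * real ((k-1) choose j) *
        ( sH (a - r - 1) ^ 3 + sH (a - r - 1) * sHm 2 (a - r - 1) + sH (a - r - 1) * zeta2
          - sH (a - r - 1 - j) ^ 3 - sH (a - r - 1 - j) * sHm 2 (a - r - 1 - j) - sH (a - r - 1 - j) * zeta2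
          + (real (r + 1) - a) * (\<Sum>i=1..r+1. sH (a + i - r - 1) ^ 2 / (real i * (a + i - r - 1)))
          + (\<Sum>i=1..j. sH (a + i - r - 1 - j) / (a + i - r - 1 - j) ^ 2)
          - (real (r + 1 + j) - a) * (\<Sum>i=1..r+1+j. sH (a + i - r - 1 - j) ^ 2 / (real i * (a + i - r - 1 - j))))))"
proof -
  have b: "a - r - 1 - j \<ge> 0" if "j \<in> {1..k-1}" for j :: nat
    using that assms(2) by auto
  show ?thesis
    by (intro conjI binomial_series_sums_hsum_tails[OF assms(1) sH_bigo_sqrt assms(2)]
        binomial_series_sums_hsum_tails[OF assms(1) sHm_bigo_sqrt[of 2] assms(2)]
        binomial_series_sums_hsum_tails[OF assms(1) sH_squared_bigo_sqrt assms(2)]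
        hsum_tails_sH hsum_tails_sHm2 hsum_tails_sH_squared b) simp_all
qed

end
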